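(* Let $r$ be a positive odd integer and $x\in\mathbb{I}$. Then: (i) $y_1(x)\le\frac1r$ if and only if $d_1(x)\ge r$. (ii) If $n\ge2$ and $\epsilon_n(x)=\epsilon_{n-1}(x)$ (i.e. $s_{n-1}(x)=1$), then $y_n(x)\le\frac1r$ if and only if $d_n(x)\ge r(d_{n-1}(x)-1)$. (iii) If $n\ge2$ and $\epsilon_n(x)=-\epsilon_{n-1}(x)$ (i.e. $s_{n-1}(x)=-1$), then $y_n(x)\le\frac1r$ if and only if $d_n(x)\ge r(d_{n-1}(x)+1)$.
   Context: $\mathbb{I}=(0,1)\setminus\mathbb{Q}$. Define $T\colon[0,1)\to[0,1)$ by: for $k\in\mathbb{N}$, $Tx=\lceil 1/x\rceil x-1$ if $x\in(\frac{1}{2k},\frac{1}{2k-1})$; $Tx=1-\lfloor 1/x\rfloor x$ if $x\in(\frac{1}{2k+1},\frac{1}{2k})$; $Tx=0$ if $x\in\{0\}\cup\{1/n\colon n\ge 2\}$. For $x\in(0,1)$ define $d_1(x)=\lceil 1/x\rceil$, $s_1(x)=1$ if $x\in[\frac{1}{2k},\frac{1}{2k-1})$ for some $k$, and $d_1(x)=\lfloor 1/x\rfloor$, $s_1(x)=-1$ if $x\in[\frac{1}{2k+1},\frac{1}{2k})$ for some $k$; $d_{n+1}(x)=d_1(T^nx)$, $s_{n+1}(x)=s_1(T^nx)$, $\epsilon_1(x)=1$, $\epsilon_{n+1}(x)=\prod_{k=1}^ns_k(x)$. For $x\in\mathbb{I}$ define $y_1(x)=x$ and, for $n\ge2$, $y_n(x)=(d_{n-1}(x)-1)T^{n-1}x$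 if $\epsilon_n(x)=\epsilon_{n-1}(x)$, and $y_n(x)=(d_{n-1}(x)+1)T^{n-1}x$ if $\epsilon_n(x)=-\epsilon_{n-1}(x)$. *)

theory Defs
  imports Complex_Main
begin

text \<open>The map T on [0,1) (extended by 0 outside, irrelevant for irrational x in (0,1)).\<close>
definition T :: "real \<Rightarrow> real" where
  "T x = (if \<exists>k::nat. k \<ge> 1 \<and> 1 / real (2*k) < x \<and> x < 1 / real (2*k - 1)
          then real_of_int \<lceil>1 / x\<rceil> * x - 1
          else if \<exists>k::nat. k \<ge> 1 \<and> 1 / real (2*k + 1) < x \<and> x < 1 / real (2*k)
          then 1 - real_of_int \<lfloor>1 / x\<rfloor> * x
          else 0)"

definition in_pos_interval :: "real \<Rightarrow> bool" where
  "in_pos_interval x \<longleftrightarrow> (\<exists>k::nat. k \<ge> 1 \<and> 1 / real (2*k) \<le> x \<and> x < 1 / real (2*k - 1))"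

definition d1 :: "real \<Rightarrow> int" where
  "d1 x = (if in_pos_interval x then \<lceil>1 / x\<rceil> else \<lfloor>1 / x\<rfloor>)"

definition s1 :: "real \<Rightarrow> int" where
  "s1 x = (if in_pos_interval x then 1 else -1)"

text \<open>Indices start at 1: d n x = d1 (T^(n-1) x), s n x = s1 (T^(n-1) x).\<close>
definition d :: "nat \<Rightarrow> real \<Rightarrow> int" where
  "d n x = d1 ((T ^^ (n - 1)) x)"

definition s :: "nat \<Rightarrow> real \<Rightarrow> int" where
  "s n x = s1 ((T ^^ (n - 1)) x)"

definition eps :: "nat \<Rightarrow> real \<Rightarrow> int" where
  "eps n x = (\<Prod>k = 1..<n. s k x)"

definition y :: "nat \<Rightarrow> real \<Rightarrow> real" where
  "y n x = (if n \<le> 1 then x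
            else if eps n x = eps (n - 1) x
                 then real_of_int (d (n - 1) x - 1) * (T ^^ (n - 1)) x
                 else real_of_int (d (n - 1) x + 1) * (T ^^ (n - 1)) x)"

end

theory Submission
  imports Defs
begin

text \<open>For irrational x in (0,1) the digit d1 x is whichever of the floor and the ceiling of 1/x
  is even, so it lies within distance 1 of the irrational number 1/x. Hence an odd integer N
  satisfies N \<le> 1/x exactly when N \<le> d1 x. Moreover T x = |d1 x * x - 1| is again irrational and
  in (0,1). Each y n x has the form c * w with w = T^(n-1) x and c odd (c = 1, or c = d (n-1) x \<plusminus> 1
  with d (n-1) x even), and c * w \<le> 1/r means r * c \<le> 1/w, where r * c is odd.\<close>

lemma inverse_floor_bounds:
  assumes "0 < x" "x < 1" "x \<notin> \<rat>"
  shows "\<lfloor>1 / x\<rfloor> \<ge> 1" "of_int \<lfloor>1 / x\<rfloor> < 1 / x" "1 / x < of_int \<lfloor>1 / x\<rfloor> + 1"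
proof -
  have "1 / x \<notin> \<rat>" using assms(3) by (simp flip: inverse_eq_divide)
  then have "1 / x \<noteq> of_int \<lfloor>1 / x\<rfloor>" by (metis Rats_of_int)
  then show "of_int \<lfloor>1 / x\<rfloor> < 1 / x"
    by (metis of_int_floor_le order_le_less)
  show "1 / x < of_int \<lfloor>1 / x\<rfloor> + 1"
    by linarith
  show "\<lfloor>1 / x\<rfloor> \<ge> 1" using assms(1,2) by (simp add: le_floor_iff)
qed

lemma in_pos_interval_iff_odd_floor:
  assumes "0 < x" "x < 1" "x \<notin> \<rat>"
  shows "in_pos_interval x \<longleftrightarrow> odd \<lfloor>1 / x\<rfloor>"
proof
  assume "in_pos_interval x"
  then obtain k :: nat where k: "k \<ge> 1" "1 / real (2*k) \<le> x" "x < 1 / real (2*k - 1)"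
    unfolding in_pos_interval_def by blast
  then have "real (2*k) - 1 < 1 / x" "1 / x \<le> real (2*k)"
    using assms(1) by (auto simp: field_simps of_nat_diff)
  then have "\<lfloor>1 / x\<rfloor> = 2 * int k - 1"
    using inverse_floor_bounds[OF assms] by linarith
  then show "odd \<lfloor>1 / x\<rfloor>" using k(1) by simp
next
  define m where "m = \<lfloor>1 / x\<rfloor>"
  define k where "k = nat ((m + 1) div 2)"
  assume "odd \<lfloor>1 / x\<rfloor>"
  then have "odd m" by (simp add: m_def)
  moreover have "m \<ge> 1" using inverse_floor_bounds[OF assms] unfolding m_def by simp
  ultimately have "k \<ge> 1" "2 * int k = m + 1"
    unfolding k_def by (auto elim!: oddE)
  then have k: "k \<ge> 1" "real (2*k) = of_int m + 1" "real (2*k - 1) = of_int m"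
    using arg_cong[where f = real_of_int, OF \<open>2 * int k = m + 1\<close>] by (simp_all add: of_nat_diff)
  have "1 / (of_int m + 1) \<le> x" "x < 1 / of_int m"
    using assms(1) \<open>m \<ge> 1\<close> inverse_floor_bounds(2,3)[OF assms, folded m_def]
    by (simp_all add: field_simps)
  then have "1 / real (2*k) \<le> x" "x < 1 / real (2*k - 1)"
    using k by simp_all
  with k(1) show "in_pos_interval x"
    unfolding in_pos_interval_def by blast
qed

lemma d1_eq_even_rounding:
  assumes "0 < x" "x < 1" "x \<notin> \<rat>"
  shows "d1 x = (if odd \<lfloor>1 / x\<rfloor> then \<lfloor>1 / x\<rfloor> + 1 else \<lfloor>1 / x\<rfloor>)"
  using inverse_floor_bounds(2)[OF assms] in_pos_interval_iff_odd_floor[OF assms]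
  by (simp add: d1_def ceiling_altdef)

lemma d1_even_near_inverse:
  assumes "0 < x" "x < 1" "x \<notin> \<rat>"
  shows "even (d1 x)" "d1 x \<ge> 2" "\<bar>1 / x - of_int (d1 x)\<bar> < 1"
proof -
  define m where "m = \<lfloor>1 / x\<rfloor>"
  have "m \<ge> 1" "of_int m < 1 / x" "1 / x < of_int m + 1"
    using inverse_floor_bounds[OF assms] unfolding m_def by auto
  moreover have "d1 x = (if odd m then m + 1 else m)"
    using d1_eq_even_rounding[OF assms] unfolding m_def .
  ultimately show "even (d1 x)" "d1 x \<ge> 2" "\<bar>1 / x - of_int (d1 x)\<bar> < 1"
    by (auto elim!: evenE)
qed

lemma T_eq_abs:
  assumes "0 < x" "x < 1" "x \<notin> \<rat>"
  shows "T x = \<bar>of_int (d1 x) * x - 1\<bar>"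
proof (cases "in_pos_interval x")
  case True
  then obtain k :: nat where k: "k \<ge> 1" "1 / real (2*k) \<le> x" "x < 1 / real (2*k - 1)"
    unfolding in_pos_interval_def by blast
  have "1 / real (2*k) \<in> \<rat>" by simp
  with k(2) assms(3) have "1 / real (2*k) < x" by (auto simp: order_le_less)
  with k have "T x = of_int \<lceil>1 / x\<rceil> * x - 1"
    unfolding T_def by auto
  moreover have "1 \<le> of_int \<lceil>1 / x\<rceil> * x"
    using assms(1) mult_right_mono[OF le_of_int_ceiling[of "1 / x"], of x] by simp
  ultimately show ?thesis
    using True by (simp add: d1_def)
next
  case False
  define m where "m = \<lfloor>1 / x\<rfloor>"
  define k where "k = nat (m div 2)"
  have m: "m \<ge> 1" "of_int m < 1 / x" "1 / x < of_int m + 1"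
    using inverse_floor_bounds[OF assms] unfolding m_def by auto
  moreover have "even m"
    using False in_pos_interval_iff_odd_floor[OF assms] unfolding m_def by simp
  ultimately have "k \<ge> 1" "2 * int k = m"
    unfolding k_def by (auto elim!: evenE)
  then have k: "k \<ge> 1" "real (2*k) = of_int m" "real (2*k + 1) = of_int m + 1"
    using arg_cong[where f = real_of_int, OF \<open>2 * int k = m\<close>] by simp_all
  have "1 / (of_int m + 1) < x" "x < 1 / of_int m"
    using assms(1) m by (simp_all add: field_simps)
  then have "1 / real (2*k + 1) < x" "x < 1 / real (2*k)"
    unfolding k(2,3) .
  moreover have "\<not> (\<exists>k::nat. k \<ge> 1 \<and> 1 / real (2*k) < x \<and> x < 1 / real (2*k - 1))"
    using False unfolding in_pos_interval_def by (auto intro: less_imp_le)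
  ultimately have "T x = 1 - of_int m * x"
    using k(1) unfolding T_def m_def by auto
  moreover have "of_int m * x < 1"
    using assms(1) m by (simp add: field_simps)
  ultimately show ?thesis
    using False by (simp add: d1_def m_def)
qed

lemma T_irrational_in_unit_interval:
  assumes "0 < x" "x < 1" "x \<notin> \<rat>"
  shows "0 < T x" "T x < 1" "T x \<notin> \<rat>"
proof -
  define c where "c = real_of_int (d1 x)"
  have "c \<ge> 2" "\<bar>1 / x - c\<bar> < 1"
    using d1_even_near_inverse[OF assms] unfolding c_def by simp_all
  have Tx: "T x = \<bar>c * x - 1\<bar>"
    using T_eq_abs[OF assms] unfolding c_def .
  have "\<bar>c * x - 1\<bar> = x * \<bar>1 / x - c\<bar>"
    using assms(1) by (simp add: abs_mult flip: abs_minus_commute) (simp add: field_simps)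
  also have "\<dots> < x"
    using mult_strict_left_mono[OF \<open>\<bar>1 / x - c\<bar> < 1\<close> assms(1)] by simp
  also have "\<dots> < 1" by (fact assms(2))
  finally show "T x < 1" using Tx by simp
  have x_eq: "x = (1 + T x) / c \<or> x = (1 - T x) / c"
    using Tx \<open>c \<ge> 2\<close> by (auto simp: field_simps abs_if split: if_splits)
  show "T x \<notin> \<rat>"
  proof
    assume "T x \<in> \<rat>"
    then have "(1 + T x) / c \<in> \<rat>" "(1 - T x) / c \<in> \<rat>"
      unfolding c_def by simp_all
    then have "x \<in> \<rat>" using x_eq by metis
    with assms(3) show False ..
  qed
  then have "T x \<noteq> 0" by auto
  then show "0 < T x" using Tx by simp
qed

lemma funpow_T_irrational_in_unit_interval:
  assumes "0 < x" "x < 1" "x \<notin> \<rat>"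
  shows "0 < (T ^^ n) x \<and> (T ^^ n) x < 1 \<and> (T ^^ n) x \<notin> \<rat>"
  by (induction n) (use assms T_irrational_in_unit_interval in auto)

lemma odd_le_inverse_iff_le_d1:
  assumes "0 < x" "x < 1" "x \<notin> \<rat>" "odd N"
  shows "of_int N \<le> 1 / x \<longleftrightarrow> N \<le> d1 x"
proof -
  have "even (d1 x)" "\<bar>1 / x - of_int (d1 x)\<bar> < 1"
    using d1_even_near_inverse[OF assms(1-3)] by simp_all
  moreover from this have "N \<noteq> d1 x" using assms(4) by auto
  ultimately show ?thesis by linarith
qed

lemma scaled_le_inverse_iff_le_d1:
  assumes "0 < w" "w < 1" "w \<notin> \<rat>" "c > 0" "odd c" "odd r"
  shows "of_int c * w \<le> 1 / real r \<longleftrightarrow> int r * c \<le> d1 w"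
proof -
  have "r > 0" using \<open>odd r\<close> by (intro odd_pos)
  then have "of_int c * w \<le> 1 / real r \<longleftrightarrow> of_int (int r * c) \<le> 1 / w"
    using assms(1,4) by (simp add: field_simps)
  also have "\<dots> \<longleftrightarrow> int r * c \<le> d1 w"
    using assms by (intro odd_le_inverse_iff_le_d1) auto
  finally show ?thesis .
qed

lemma eps_nonzero: "eps n x \<noteq> 0"
  unfolding eps_def s_def s1_def by (simp add: prod_zero_iff)

theorem lemma3p5:
  fixes r :: nat and x :: real
  assumes "r > 0" and "odd r"
    and "0 < x" and "x < 1" and "x \<notin> \<rat>"
  shows "(y 1 x \<le> 1 / real r \<longleftrightarrow> d 1 x \<ge> int r)
    \<and> (\<forall>n\<ge>2. eps n x = eps (n - 1) x \<longrightarrow>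
          (y n x \<le> 1 / real r \<longleftrightarrow> d n x \<ge> int r * (d (n - 1) x - 1)))
    \<and> (\<forall>n\<ge>2. eps n x = - eps (n - 1) x \<longrightarrow>
          (y n x \<le> 1 / real r \<longleftrightarrow> d n x \<ge> int r * (d (n - 1) x + 1)))"
proof (intro conjI allI impI)
  show "y 1 x \<le> 1 / real r \<longleftrightarrow> d 1 x \<ge> int r"
    using scaled_le_inverse_iff_le_d1[OF assms(3-5), of 1 r] assms(2) by (simp add: y_def d_def)
next
  fix n :: nat
  assume "n \<ge> 2"
  then obtain m where n: "n = Suc (Suc m)"
    using add_2_eq_Suc le_Suc_ex by blast
  define z where "z = (T ^^ m) x"
  have z: "0 < z" "z < 1" "z \<notin> \<rat>"
    using funpow_T_irrational_in_unit_interval[OF assms(3-5)] unfolding z_def by blast+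
  note le_iff = scaled_le_inverse_iff_le_d1[OF T_irrational_in_unit_interval[OF z] _ _ \<open>odd r\<close>]
  have "even (d1 z)" "d1 z \<ge> 2"
    using d1_even_near_inverse[OF z] by simp_all
  moreover have "d (n - 1) x = d1 z" "d n x = d1 (T z)" "(T ^^ (n - 1)) x = T z"
    unfolding d_def z_def n by simp_all
  ultimately show
    "eps n x = eps (n - 1) x \<Longrightarrow>
       y n x \<le> 1 / real r \<longleftrightarrow> d n x \<ge> int r * (d (n - 1) x - 1)"
    "eps n x = - eps (n - 1) x \<Longrightarrow>
       y n x \<le> 1 / real r \<longleftrightarrow> d n x \<ge> int r * (d (n - 1) x + 1)"
    \<comment> \<open>\<open>eps_nonzero\<close> turns \<open>eps n x = - eps (n - 1) x\<close> into the else-branch of \<open>y_def\<close>\<close>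
    using le_iff[of "d1 z - 1"] le_iff[of "d1 z + 1"] eps_nonzero[of n x]
    by (auto simp: y_def n)
qed

end
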